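(* Let $C$ be a computad, $d\ge1$, and $c\in\mathrm{Cell}_d(C)$ a $d$-cell with $\mathrm{supp}_d(c)=\emptyset$. Then $\mathrm{supp}_{d-1}(\mathrm{src}\,c)=\mathrm{supp}_{d-1}(\mathrm{tgt}\,c)=\mathrm{supp}_{d-1}(c)$.
   Context: Computads (Dean et al.) are defined by induction on dimension together with their cells: an $n$-computad consists of an $(n-1)$-computad, a set $V_n$ of $n$-dimensional generators, and an attaching function sending each $v\in V_n$ to a pair of parallel $(n-1)$-cells; a computad is a compatible sequence of $n$-computads. The $n$-cells $\mathrm{Cell}_n(C)$ are generated by (i) $\mathrm{var}\,v$ for $v\in V_n$, with source and target given by the attaching function, (ii) $\mathrm{coh}(B,A,f)$ where $B$ is a Batanin tree with $\dim B\le n$, $A$ is a full $(n-1)$-sphere of the pasting diagram $\mathrm{Pos}(B)$, and $f$ assigns to each $k$-position of $B$ a $k$-cell of $C$ compatibly with sources and targets; its source and target are those of $A$ with $f$ substituted. Support: $\mathrm{supp}_n(\mathrm{var}\,v)=\{v\}$ and $\mathrm{supp}_n(\mathrm{coh}(B,A,f))=\bigcup_{p\in\mathrm{Pos}_n(B)}\mathrm{supp}_n(f(p))$ for an $n$-cell; more generally, for $k\le n$, $\mathrm{supp}_k(c)$ is the set of $k$-dimensional generators used in the definition of $c$ or of its iterated sources and targets. *)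

theory Defs
  imports Main
begin

datatype tree = Br "tree list"

fun tree_dim :: "tree \<Rightarrow> nat" where
  "tree_dim (Br ts) = (if ts = [] then 0 else Suc (Max (set (map tree_dim ts))))"

text \<open>Positions of B = Br [B_0,...,B_(m-1)]: the 0-positions are [i] for i \<le> m;
  the (k+1)-positions are i # p with i < m and p a k-position of B_i.
  A position p has dimension length p - 1.\<close>

inductive ispos :: "tree \<Rightarrow> nat list \<Rightarrow> bool" where
  pos0: "i \<le> length ts \<Longrightarrow> ispos (Br ts) [i]"
| posS: "i < length ts \<Longrightarrow> ispos (ts ! i) p \<Longrightarrow> ispos (Br ts) (i # p)"

fun psrc :: "nat list \<Rightarrow> nat list" where
  "psrc (i # p) = (if length p = 1 then [i] else i # psrc p)"
| "psrc [] = []"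

fun ptgt :: "nat list \<Rightarrow> nat list" where
  "ptgt (i # p) = (if length p = 1 then [Suc i] else i # ptgt p)"
| "ptgt [] = []"

text \<open>Positions of the source (s = True) resp. target (s = False) n-boundary of B.\<close>

inductive inbd :: "bool \<Rightarrow> nat \<Rightarrow> tree \<Rightarrow> nat list \<Rightarrow> bool" where
  bd0s: "inbd True 0 (Br ts) [0]"
| bd0t: "inbd False 0 (Br ts) [length ts]"
| bdS0: "i \<le> length ts \<Longrightarrow> inbd s (Suc n) (Br ts) [i]"
| bdSS: "i < length ts \<Longrightarrow> inbd s n (ts ! i) p \<Longrightarrow> inbd s (Suc n) (Br ts) (i # p)"

text \<open>Var v: generator of the ambient computad; PVar p: position p (generator of Pos(B));
  Coh B a b f: the coherence cell coh(B,(a,b),f).\<close>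

datatype 'v tm = Var 'v | PVar "nat list" | Coh tree "'v tm" "'v tm" "nat list \<Rightarrow> 'v tm"

primrec subst :: "(nat list \<Rightarrow> 'v tm) \<Rightarrow> 'v tm \<Rightarrow> 'v tm" where
  "subst f (Var v) = Var v"
| "subst f (PVar p) = f p"
| "subst f (Coh B a b g) = Coh B a b (\<lambda>p. subst f (g p))"

text \<open>Generators occurring in a term (the sphere of a coherence lives in Pos(B), not in
  the ambient computad, so it is not traversed).\<close>

primrec occ :: "'v tm \<Rightarrow> 'v tm set" where
  "occ (Var v) = {Var v}"
| "occ (PVar p) = {PVar p}"
| "occ (Coh B a b f) = (\<Union>p\<in>{p. ispos B p}. occ (f p))"

text \<open>A generic "generator structure": G n = generators of dimension n (as terms),
  At g = attaching sphere of generator g.\<close>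

definition tsrc :: "('v tm \<Rightarrow> 'v tm \<times> 'v tm) \<Rightarrow> 'v tm \<Rightarrow> 'v tm" where
  "tsrc At t = (case t of Coh B a b f \<Rightarrow> subst f a | _ \<Rightarrow> fst (At t))"

definition ttgt :: "('v tm \<Rightarrow> 'v tm \<times> 'v tm) \<Rightarrow> 'v tm \<Rightarrow> 'v tm" where
  "ttgt At t = (case t of Coh B a b f \<Rightarrow> subst f b | _ \<Rightarrow> snd (At t))"

fun iterbd :: "('v tm \<Rightarrow> 'v tm \<times> 'v tm) \<Rightarrow> nat \<Rightarrow> 'v tm \<Rightarrow> 'v tm set" where
  "iterbd At 0 t = {t}"
| "iterbd At (Suc j) t = (\<Union>t'\<in>iterbd At j t. {tsrc At t', ttgt At t'})"

definition gsupp :: "(nat \<Rightarrow> 'v tm set) \<Rightarrow> ('v tm \<Rightarrow> 'v tm \<times> 'v tm) \<Rightarrow> nat \<Rightarrow> nat \<Rightarrow> 'v tm \<Rightarrow> 'v tm set" where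
  "gsupp G At k n t = {g \<in> G k. \<exists>j\<le>n - k. \<exists>t'\<in>iterbd At j t. g \<in> occ t'}"

definition posG :: "tree \<Rightarrow> nat \<Rightarrow> 'v tm set" where
  "posG B n = PVar ` {p. ispos B p \<and> length p = Suc n}"

definition posAt :: "'v tm \<Rightarrow> 'v tm \<times> 'v tm" where
  "posAt t = (case t of PVar p \<Rightarrow> (PVar (psrc p), PVar (ptgt p)) | _ \<Rightarrow> (t, t))"

text \<open>(a,b) is a full m-sphere of Pos(B): full support of a (all dimensions \<le> m) is the
  source m-boundary of B, and of b the target m-boundary.\<close>

definition full_sphere :: "tree \<Rightarrow> nat \<Rightarrow> 'v tm \<Rightarrow> 'v tm \<Rightarrow> bool" where
  "full_sphere B m a b \<longleftrightarrow>
     (\<Union>k\<le>m. gsupp (posG B) posAt k m a) = PVar ` {p. inbd True m B p} \<and>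
     (\<Union>k\<le>m. gsupp (posG B) posAt k m b) = PVar ` {p. inbd False m B p}"

inductive cell :: "(nat \<Rightarrow> 'v tm set) \<Rightarrow> ('v tm \<Rightarrow> 'v tm \<times> 'v tm) \<Rightarrow> nat \<Rightarrow> 'v tm \<Rightarrow> bool" where
  gen: "t \<in> G n \<Longrightarrow> cell G At n t"
| coh: "\<lbrakk> tree_dim B \<le> Suc m;
          cell (posG B) posAt m a; cell (posG B) posAt m b;
          m = 0 \<or> (tsrc posAt a = tsrc posAt b \<and> ttgt posAt a = ttgt posAt b);
          full_sphere B m a b;
          \<forall>p. ispos B p \<longrightarrow> cell G At (length p - 1) (f p);
          \<forall>p. ispos B p \<and> length p \<ge> 2 \<longrightarrow>
               tsrc At (f p) = f (psrc p) \<and> ttgt At (f p) = f (ptgt p) \<rbrakk>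
        \<Longrightarrow> cell G At (Suc m) (Coh B a b f)"

definition cG :: "(nat \<Rightarrow> 'v set) \<Rightarrow> nat \<Rightarrow> 'v tm set" where
  "cG V n = Var ` V n"

definition cAt :: "('v \<Rightarrow> 'v tm \<times> 'v tm) \<Rightarrow> 'v tm \<Rightarrow> 'v tm \<times> 'v tm" where
  "cAt att t = (case t of Var v \<Rightarrow> att v | _ \<Rightarrow> (t, t))"

definition computad :: "(nat \<Rightarrow> 'v set) \<Rightarrow> ('v \<Rightarrow> 'v tm \<times> 'v tm) \<Rightarrow> bool" where
  "computad V att \<longleftrightarrow>
     (\<forall>n k. n \<noteq> k \<longrightarrow> V n \<inter> V k = {}) \<and>
     (\<forall>m v. v \<in> V (Suc m) \<longrightarrow>
        cell (cG V) (cAt att) m (fst (att v)) \<and> cell (cG V) (cAt att) m (snd (att v)) \<and>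
        (m = 0 \<or> (tsrc (cAt att) (fst (att v)) = tsrc (cAt att) (snd (att v)) \<and>
                  ttgt (cAt att) (fst (att v)) = ttgt (cAt att) (snd (att v)))))"

definition Cell :: "(nat \<Rightarrow> 'v set) \<Rightarrow> ('v \<Rightarrow> 'v tm \<times> 'v tm) \<Rightarrow> nat \<Rightarrow> 'v tm set" where
  "Cell V att n = {c. cell (cG V) (cAt att) n c}"

definition src :: "('v \<Rightarrow> 'v tm \<times> 'v tm) \<Rightarrow> 'v tm \<Rightarrow> 'v tm" where
  "src att c = tsrc (cAt att) c"

definition tgt :: "('v \<Rightarrow> 'v tm \<times> 'v tm) \<Rightarrow> 'v tm \<Rightarrow> 'v tm" where
  "tgt att c = ttgt (cAt att) c"

definition supp :: "(nat \<Rightarrow> 'v set) \<Rightarrow> ('v \<Rightarrow> 'v tm \<times> 'v tm) \<Rightarrow> nat \<Rightarrow> nat \<Rightarrow> 'v tm \<Rightarrow> 'v set" where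
  "supp V att k n c = {v. Var v \<in> gsupp (cG V) (cAt att) k n c}"

end

theory Submission
  imports Defs "HOL-Library.Disjoint_Sets"
begin

text \<open>The (d-1)-generators used by c = coh(B, A, f) are those used by the
  cells f p. Positions p of dimension below d - 1 contribute none; a top-dimensional
  position q carries a d-cell without d-generators, so by induction on cells it contributes
  exactly what its source and target faces contribute. Following top-dimensional positions
  backwards (resp. forwards) connects every (d-1)-position of B to the source (resp. target)
  (d-1)-boundary of B, so every contribution already occurs on that boundary, and since A is
  a full sphere the boundary contributions are precisely what src c (resp. tgt c) uses.\<close>

lemma ispos_not_Nil: "ispos B p \<Longrightarrow> p \<noteq> []"
  by (induction rule: ispos.induct) auto

lemma ispos_length_le: "ispos B p \<Longrightarrow> length p \<le> Suc (tree_dim B)"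
proof (induction rule: ispos.induct)
  case (posS i ts p)
  then have "tree_dim (ts ! i) \<le> Max (tree_dim ` set ts)" "ts \<noteq> []"
    by auto
  with posS.IH show ?case
    by (simp del: Max_ge_iff)
qed simp

lemma ispos_psrc_ptgt:
  assumes "ispos B q" and "length q \<ge> 2"
  shows "ispos B (psrc q) \<and> ispos B (ptgt q)
         \<and> length (psrc q) = length q - 1 \<and> length (ptgt q) = length q - 1"
  using assms
proof (induction rule: ispos.induct)
  case (posS i ts p)
  show ?case
  proof (cases "length p = 1")
    case False
    with posS.hyps(2) have "length p \<ge> 2"
      by (cases p) (auto dest: ispos_not_Nil simp: Suc_le_eq)
    with posS False show ?thesis
      by (auto intro: ispos.intros)
  qed (use posS.hyps in \<open>auto intro: ispos.intros\<close>)
qed simp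

lemma inbd_imp_ispos: "inbd s n B p \<Longrightarrow> ispos B p"
  by (induction rule: inbd.induct) (auto intro: ispos.intros)

definition pface :: "bool \<Rightarrow> nat list \<Rightarrow> nat list" where
  "pface s = (if s then psrc else ptgt)"

text \<open>How far the last coordinate of a position is from the source (s = True) resp. target
  end of its branch.\<close>

fun bd_dist :: "bool \<Rightarrow> tree \<Rightarrow> nat list \<Rightarrow> nat" where
  "bd_dist s (Br ts) [] = 0"
| "bd_dist s (Br ts) [i] = (if s then i else length ts - i)"
| "bd_dist s (Br ts) (i # j # p) = bd_dist s (ts ! i) (j # p)"

lemma pface_Cons: "length q \<ge> 2 \<Longrightarrow> pface s (i # q) = i # pface s q"
  by (cases q) (auto simp: pface_def)

lemma pface_not_Nil: "length q \<ge> 2 \<Longrightarrow> pface s q \<noteq> []"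
  by (cases q) (auto simp: pface_def)

lemma off_boundary_is_opposite_face:
  assumes "ispos B p" and "length p = Suc m" and "\<not> inbd s m B p"
  shows "\<exists>q. ispos B q \<and> length q = Suc (Suc m) \<and> pface (\<not> s) q = p
           \<and> bd_dist s B (pface s q) < bd_dist s B p"
  using assms
proof (induction arbitrary: m rule: ispos.induct)
  case (pos0 i ts)
  define j where "j = (if s then i - 1 else i)"
  have j: "j < length ts \<and> pface (\<not> s) [j, 0] = [i]
            \<and> bd_dist s (Br ts) (pface s [j, 0]) < bd_dist s (Br ts) [i]"
  proof (cases s)
    case True
    with pos0 obtain i' where "i = Suc i'"
      by (cases i) (auto intro: inbd.intros)
    with True pos0 show ?thesis
      by (auto simp: j_def pface_def)
  next
    case False
    with pos0 have "i \<noteq> length ts"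
      by (auto intro: inbd.intros)
    with False pos0 show ?thesis
      by (auto simp: j_def pface_def)
  qed
  obtain us where "ts ! j = Br us"
    by (cases "ts ! j")
  with j have "ispos (Br ts) [j, 0]"
    by (auto intro!: ispos.intros)
  with j pos0 show ?case
    by (intro exI[of _ "[j, 0]"]) (auto simp: pface_def)
next
  case (posS i ts p)
  obtain m' where m: "m = Suc m'"
    using posS by (cases m) (auto dest: ispos_not_Nil)
  with posS have "\<not> inbd s m' (ts ! i) p"
    by (auto intro: inbd.intros)
  with posS.IH[of m'] posS.prems m obtain q where q: "ispos (ts ! i) q" "length q = Suc (Suc m')"
      "pface (\<not> s) q = p" "bd_dist s (ts ! i) (pface s q) < bd_dist s (ts ! i) p"
    by auto
  obtain j p' where "p = j # p'"
    using posS.hyps(2) by (cases p) (auto dest: ispos_not_Nil)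
  moreover obtain k q' where "pface s q = k # q'"
    using pface_not_Nil[of q s] q(2) by (cases "pface s q") auto
  ultimately show ?case
    using q posS.hyps m by (intro exI[of _ "i # q"]) (auto simp: pface_Cons intro: ispos.intros)
qed

lemma flow_to_boundary:
  assumes step: "\<And>q. ispos B q \<Longrightarrow> length q = Suc (Suc m) \<Longrightarrow> X (pface (\<not> s) q) \<subseteq> X (pface s q)"
  shows "ispos B p \<Longrightarrow> length p = Suc m
           \<Longrightarrow> X p \<subseteq> (\<Union>q\<in>{q. ispos B q \<and> length q = Suc m \<and> inbd s m B q}. X q)"
proof (induction "bd_dist s B p" arbitrary: p rule: less_induct)
  case less
  show ?case
  proof (cases "inbd s m B p")
    case False
    with less.prems obtain q where q: "ispos B q" "length q = Suc (Suc m)" "pface (\<not> s) q = p"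
        "bd_dist s B (pface s q) < bd_dist s B p"
      using off_boundary_is_opposite_face by blast
    then have "ispos B (pface s q)" "length (pface s q) = Suc m"
      using ispos_psrc_ptgt[OF q(1)] by (auto simp: pface_def)
    with less.hyps q(4) step[OF q(1,2)] q(3) show ?thesis
      by blast
  qed (use less.prems in auto)
qed

lemma occ_subst:
  "occ (subst f a) = (\<Union>q\<in>{q. PVar q \<in> occ a}. occ (f q)) \<union> {x \<in> occ a. \<forall>q. x \<noteq> PVar q}"
  by (induction a) auto

lemma occ_cell_subset:
  assumes "cell G At n t" and "\<And>k g. g \<in> G k \<Longrightarrow> occ g = {g}"
  shows "occ t \<subseteq> (\<Union>k\<le>n. G k)"
  using assms
proof (induction rule: cell.induct)
  case (coh B m a b G At f)
  show ?case
  proof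
    fix x assume "x \<in> occ (Coh B a b f)"
    then obtain p where p: "ispos B p" "x \<in> occ (f p)"
      by auto
    moreover have "length p - 1 \<le> Suc m"
      using ispos_length_le[OF p(1)] coh.hyps(1) by simp
    ultimately show "x \<in> (\<Union>k\<le>Suc m. G k)"
      using coh.IH coh.prems by fastforce
  qed
qed auto

lemma gsupp_same_dim: "gsupp G At k k t = G k \<inter> occ t"
  by (auto simp: gsupp_def)

lemma gsupp_subset: "gsupp G At k n t \<subseteq> G k"
  by (auto simp: gsupp_def)

lemma occ_posG: "g \<in> posG B k \<Longrightarrow> occ g = {g}"
  by (auto simp: posG_def)

lemma occ_cG: "g \<in> cG V k \<Longrightarrow> occ g = {g}"
  by (auto simp: cG_def)

definition gens :: "(nat \<Rightarrow> 'v set) \<Rightarrow> nat \<Rightarrow> 'v tm set \<Rightarrow> 'v set" where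
  "gens V k X = {v \<in> V k. Var v \<in> X}"

lemma gens_Un [simp]: "gens V k (X \<union> Y) = gens V k X \<union> gens V k Y"
  by (auto simp: gens_def)

lemma gens_UN [simp]: "gens V k (\<Union>i\<in>I. X i) = (\<Union>i\<in>I. gens V k (X i))"
  by (auto simp: gens_def)

lemma supp_same_dim: "supp V att k k t = gens V k (occ t)"
  by (auto simp: supp_def gsupp_same_dim gens_def cG_def)

lemma supp_Suc_dim:
  "supp V att k (Suc k) t = gens V k (occ t \<union> occ (src att t) \<union> occ (tgt att t))"
proof -
  have j: "j \<le> Suc k - k \<longleftrightarrow> j = 0 \<or> j = 1" for j
    by auto
  show ?thesis
    unfolding supp_def gsupp_def gens_def cG_def src_def tgt_def j by auto
qed

lemma computad_disjoint_family: "computad V att \<Longrightarrow> disjoint_family V"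
  unfolding computad_def disjoint_family_on_def by blast

lemma gens_occ_cell_of_lower_dim:
  assumes "disjoint_family V" and "cell (cG V) At k t" and "k < m"
  shows "gens V m (occ t) = {}"
proof -
  have "occ t \<subseteq> (\<Union>j\<le>k. Var ` V j)"
    using occ_cell_subset[OF assms(2) occ_cG] by (simp add: cG_def)
  moreover have "V j \<inter> V m = {}" if "j \<le> k" for j
    using assms(1,3) that by (auto simp: disjoint_family_on_def)
  ultimately show ?thesis
    by (auto simp: gens_def)
qed

lemma occ_full_sphere_face_iff:
  assumes "cell (posG B) posAt m a"
    and face: "(\<Union>k\<le>m. gsupp (posG B) posAt k m a) = PVar ` {p. inbd s m B p}"
  shows "PVar q \<in> occ a \<and> length q = Suc m \<longleftrightarrow> ispos B q \<and> length q = Suc m \<and> inbd s m B q"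
proof -
  have posG_iff: "PVar q \<in> posG B k \<longleftrightarrow> ispos B q \<and> length q = Suc k" for k
    by (auto simp: posG_def)
  have "occ a \<subseteq> (\<Union>k\<le>m. posG B k)"
    using assms(1) occ_posG by (rule occ_cell_subset)
  with posG_iff have "PVar q \<in> occ a \<Longrightarrow> ispos B q"
    by blast
  then have "PVar q \<in> occ a \<and> length q = Suc m \<longleftrightarrow> PVar q \<in> gsupp (posG B) posAt m m a"
    by (auto simp: gsupp_same_dim posG_iff)
  also have "\<dots> \<longleftrightarrow> PVar q \<in> (\<Union>k\<le>m. gsupp (posG B) posAt k m a) \<and> length q = Suc m"
  proof
    assume "PVar q \<in> gsupp (posG B) posAt m m a"
    moreover from this have "length q = Suc m"
      using gsupp_subset posG_iff by blast
    ultimately show "PVar q \<in> (\<Union>k\<le>m. gsupp (posG B) posAt k m a) \<and> length q = Suc m"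
      by blast
  next
    assume "PVar q \<in> (\<Union>k\<le>m. gsupp (posG B) posAt k m a) \<and> length q = Suc m"
    then obtain k where "PVar q \<in> gsupp (posG B) posAt k m a" "length q = Suc m"
      by blast
    moreover from this have "k = m"
      using gsupp_subset posG_iff by fastforce
    ultimately show "PVar q \<in> gsupp (posG B) posAt m m a"
      by simp
  qed
  also have "\<dots> \<longleftrightarrow> inbd s m B q \<and> length q = Suc m"
    unfolding face by blast
  finally show ?thesis
    using inbd_imp_ispos by blast
qed

lemma gens_occ_subst_full_sphere_face:
  assumes "cell (posG B) posAt m a"
    and "(\<Union>k\<le>m. gsupp (posG B) posAt k m a) = PVar ` {p. inbd s m B p}"
    and low: "\<And>p. ispos B p \<Longrightarrow> length p < Suc m \<Longrightarrow> gens V m (occ (f p)) = {}"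
  shows "gens V m (occ (subst f a))
           = (\<Union>q\<in>{q. ispos B q \<and> length q = Suc m \<and> inbd s m B q}. gens V m (occ (f q)))"
proof -
  have "occ a \<subseteq> (\<Union>k\<le>m. posG B k)"
    using assms(1) occ_posG by (rule occ_cell_subset)
  then have occ_a: "occ a \<subseteq> PVar ` {p. ispos B p \<and> length p \<le> Suc m}"
    by (auto simp: posG_def)
  then have "occ (subst f a) = (\<Union>q\<in>{q. PVar q \<in> occ a}. occ (f q))"
    unfolding occ_subst by blast
  then have "gens V m (occ (subst f a)) = (\<Union>q\<in>{q. PVar q \<in> occ a}. gens V m (occ (f q)))"
    by simp
  also have "\<dots> = (\<Union>q\<in>{q. PVar q \<in> occ a \<and> length q = Suc m}. gens V m (occ (f q)))"
  proof -
    have "gens V m (occ (f q)) = {}" if "PVar q \<in> occ a" "length q \<noteq> Suc m" for q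
    proof -
      have "ispos B q" "length q \<le> Suc m"
        using occ_a that(1) by auto
      with low that(2) show ?thesis
        by simp
    qed
    then show ?thesis
      by blast
  qed
  also have "\<dots> = (\<Union>q\<in>{q. ispos B q \<and> length q = Suc m \<and> inbd s m B q}. gens V m (occ (f q)))"
    using occ_full_sphere_face_iff[OF assms(1,2)] by simp
  finally show ?thesis .
qed

lemma gens_occ_Coh_eq_face:
  assumes "disjoint_family V" and "tree_dim B \<le> Suc m"
    and "cell (posG B) posAt m x"
    and "(\<Union>k\<le>m. gsupp (posG B) posAt k m x) = PVar ` {p. inbd s m B p}"
    and cells: "\<And>p. ispos B p \<Longrightarrow> cell (cG V) At (length p - 1) (f p)"
    and top: "\<And>q. ispos B q \<Longrightarrow> length q = Suc (Suc m) \<Longrightarrow>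
                gens V m (occ (f (psrc q))) = gens V m (occ (f q))
              \<and> gens V m (occ (f (ptgt q))) = gens V m (occ (f q))"
  shows "gens V m (occ (subst f x)) = gens V m (occ (Coh B a b f))"
proof -
  define Y where "Y p = gens V m (occ (f p))" for p
  define S where "S = (\<Union>q\<in>{q. ispos B q \<and> length q = Suc m \<and> inbd s m B q}. Y q)"
  have low: "Y p = {}" if "ispos B p" "length p < Suc m" for p
    using gens_occ_cell_of_lower_dim[OF assms(1) cells[OF that(1)]] that ispos_not_Nil[OF that(1)]
    by (cases p) (auto simp: Y_def)
  have face: "gens V m (occ (subst f x)) = S"
    unfolding S_def Y_def using assms(3,4) low[unfolded Y_def] by (rule gens_occ_subst_full_sphere_face)
  have reach_middle: "Y p \<subseteq> S" if "ispos B p" "length p = Suc m" for p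
    unfolding S_def using _ that
  proof (rule flow_to_boundary)
    show "Y (pface (\<not> s) q) \<subseteq> Y (pface s q)" if "ispos B q" "length q = Suc (Suc m)" for q
      using top[OF that] by (simp add: Y_def pface_def)
  qed
  have reach: "Y p \<subseteq> S" if "ispos B p" for p
  proof -
    have "length p \<le> Suc (Suc m)"
      using ispos_length_le[OF that] assms(2) by simp
    then consider "length p < Suc m" | "length p = Suc m" | "length p = Suc (Suc m)"
      by linarith
    then show ?thesis
    proof cases
      case 1
      with low that show ?thesis
        by simp
    next
      case 2
      with reach_middle that show ?thesis
        by simp
    next
      case 3
      then have "Y p = Y (psrc p)" "ispos B (psrc p)" "length (psrc p) = Suc m"
        using top[OF that] ispos_psrc_ptgt[OF that] by (auto simp: Y_def)
      with reach_middle show ?thesis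
        by simp
    qed
  qed
  have "gens V m (occ (Coh B a b f)) = (\<Union>p\<in>{p. ispos B p}. Y p)"
    by (auto simp: Y_def gens_def)
  also have "\<dots> = S"
  proof
    show "(\<Union>p\<in>{p. ispos B p}. Y p) \<subseteq> S"
      using reach by blast
    show "S \<subseteq> (\<Union>p\<in>{p. ispos B p}. Y p)"
      unfolding S_def by blast
  qed
  finally show ?thesis
    using face by simp
qed

lemma gens_occ_tsrc_ttgt_eq:
  fixes V :: "nat \<Rightarrow> 'v set"
  assumes "disjoint_family V"
  shows "cell G At n t \<Longrightarrow> G = cG V \<Longrightarrow> At = cAt att \<Longrightarrow> n = Suc m
           \<Longrightarrow> gens V (Suc m) (occ t) = {}
           \<Longrightarrow> gens V m (occ (tsrc At t)) = gens V m (occ t)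
             \<and> gens V m (occ (ttgt At t)) = gens V m (occ t)"
proof (induction arbitrary: m rule: cell.induct)
  case (gen t G n At)
  then obtain v where "v \<in> V (Suc m)" "t = Var v"
    by (auto simp: cG_def)
  with gen.prems(4) show ?case
    by (simp add: gens_def)
next
  case (coh B m' a b G At f)
  have m: "m' = m"
    using coh.prems(3) by simp
  have cells: "cell (cG V) At (length p - 1) (f p)" if "ispos B p" for p
    using coh.IH(3) that coh.prems(1) by simp
  have top: "gens V m (occ (f (psrc q))) = gens V m (occ (f q))
           \<and> gens V m (occ (f (ptgt q))) = gens V m (occ (f q))"
    if q: "ispos B q" "length q = Suc (Suc m)" for q
  proof -
    have "gens V (Suc m) (occ (f q)) \<subseteq> gens V (Suc m) (occ (Coh B a b f))"
      using q(1) by (auto simp: gens_def)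
    then have "gens V (Suc m) (occ (f q)) = {}"
      using coh.prems(4) by simp
    moreover have "length q - 1 = Suc m"
      using q(2) by simp
    ultimately have "gens V m (occ (tsrc At (f q))) = gens V m (occ (f q))
                   \<and> gens V m (occ (ttgt At (f q))) = gens V m (occ (f q))"
      using coh.IH(3) q(1) coh.prems(1,2) by simp
    moreover have "tsrc At (f q) = f (psrc q)" "ttgt At (f q) = f (ptgt q)"
      using coh.hyps(6) q by auto
    ultimately show ?thesis
      by simp
  qed
  have "full_sphere B m a b"
    using coh.hyps(5) m by simp
  then have faces:
    "(\<Union>k\<le>m. gsupp (posG B) posAt k m a) = PVar ` {p. inbd True m B p}"
    "(\<Union>k\<le>m. gsupp (posG B) posAt k m b) = PVar ` {p. inbd False m B p}"
    unfolding full_sphere_def by simp_all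
  have "gens V m (occ (subst f a)) = gens V m (occ (Coh B a b f))"
    using coh.hyps(1,2)[unfolded m] faces(1) by (rule gens_occ_Coh_eq_face[OF assms _ _ _ cells top])
  moreover have "gens V m (occ (subst f b)) = gens V m (occ (Coh B a b f))"
    using coh.hyps(1,3)[unfolded m] faces(2) by (rule gens_occ_Coh_eq_face[OF assms _ _ _ cells top])
  ultimately show ?case
    by (simp add: tsrc_def ttgt_def)
qed

theorem lemma5p6:
  fixes V :: "nat \<Rightarrow> 'v set" and att :: "'v \<Rightarrow> 'v tm \<times> 'v tm"
    and d :: nat and c :: "'v tm"
  assumes "computad V att"
    and "d \<ge> 1"
    and "c \<in> Cell V att d"
    and "supp V att d d c = {}"
  shows "supp V att (d - 1) (d - 1) (src att c) = supp V att (d - 1) d c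
       \<and> supp V att (d - 1) (d - 1) (tgt att c) = supp V att (d - 1) d c"
proof -
  obtain e where d: "d = Suc e"
    using assms(2) by (cases d) auto
  have "gens V e (occ (src att c)) = gens V e (occ c) \<and> gens V e (occ (tgt att c)) = gens V e (occ c)"
    using gens_occ_tsrc_ttgt_eq[OF computad_disjoint_family[OF assms(1)]] assms(3,4)
    by (simp add: d Cell_def supp_same_dim src_def tgt_def)
  then show ?thesis
    by (simp add: d supp_same_dim supp_Suc_dim)
qed

end
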